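(* Let $N$ be a natural number, $P=\{a\subseteq N: |a|\geq 2\}$, and let $\|\cdot\|_3$ be the graph coloring norm on subsets of $P$ (defined in the context). Let $n$ be a natural number and $A\subseteq P$. If $A$ cannot be split by $2^n$ sets, then $\|A\|_3>n$.
   Context: $N=\{0,\ldots,N-1\}$. For $A\subseteq P$ and $z\subseteq N$ let $A\restriction z=\{a\in A: a\subseteq z\}$. The relation "$\|A\|_3\geq m$" is defined recursively: $\|A\|_3\geq 0$ always; $\|A\|_3\geq 1$ iff $A\neq\emptyset$; for $m\geq 1$, $\|A\|_3\geq m+1$ iff for every $z\subseteq N$ either $\|A\restriction z\|_3\geq m$ or $\|A\restriction(N\setminus z)\|_3\geq m$. Then $\|A\|_3$ is the largest $m$ with $\|A\|_3\geq m$. $A$ is split by sets $V_0,\ldots,V_{c-1}$ (pairwise disjoint, possibly empty, with union $N$) if $A\restriction V_j=\emptyset$ for every $j<c$; $A$ can be split by $c$ sets if such a partition of $N$ into $c$ sets exists. *)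

theory Defs
  imports Main
begin

definition P :: "nat \<Rightarrow> nat set set" where
  "P N = {a. a \<subseteq> {..<N} \<and> card a \<ge> 2}"

definition restr :: "nat set set \<Rightarrow> nat set \<Rightarrow> nat set set" where
  "restr A z = {a \<in> A. a \<subseteq> z}"

fun norm3_ge :: "nat \<Rightarrow> nat set set \<Rightarrow> nat \<Rightarrow> bool" where
  "norm3_ge N A 0 = True"
| "norm3_ge N A (Suc 0) = (A \<noteq> {})"
| "norm3_ge N A (Suc (Suc m)) =
     (\<forall>z. z \<subseteq> {..<N} \<longrightarrow>
        norm3_ge N (restr A z) (Suc m) \<or> norm3_ge N (restr A ({..<N} - z)) (Suc m))"

definition norm3 :: "nat \<Rightarrow> nat set set \<Rightarrow> nat" where
  "norm3 N A = (GREATEST m. norm3_ge N A m)"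

definition can_split :: "nat \<Rightarrow> nat set set \<Rightarrow> nat \<Rightarrow> bool" where
  "can_split N A c = (\<exists>V :: nat \<Rightarrow> nat set.
      (\<forall>i<c. \<forall>j<c. i \<noteq> j \<longrightarrow> V i \<inter> V j = {}) \<and>
      (\<Union>j<c. V j) = {..<N} \<and>
      (\<forall>j<c. restr A (V j) = {}))"

end

theory Submission
  imports Defs
begin

text \<open>
  Induction on \<open>n\<close>: if for some \<open>z\<close> both \<open>A \<restriction> z\<close> and \<open>A \<restriction> (N - z)\<close> could be split by
  \<open>2^(n-1)\<close> sets, then intersecting the first splitting with \<open>z\<close> and the second with
  \<open>N - z\<close> gives a splitting of \<open>A\<close> by \<open>2^n\<close> sets. Hence for every \<open>z\<close> one of the
  two restrictions cannot be split by \<open>2^(n-1)\<close> sets and has norm \<open>\<ge> n\<close> by induction.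
  The norm is the greatest element of a set that is bounded: since every edge has two
  vertices, at each level of the recursion one vertex can be discarded.
\<close>

lemma restr_restr: "restr (restr A z) w = restr A (w \<inter> z)"
  unfolding restr_def by auto

lemma can_split_empty:
  assumes "c > 0"
  shows "can_split N {} c"
  unfolding can_split_def restr_def
  using assms by (intro exI[of _ "\<lambda>i. if i = 0 then {..<N} else {}"]) auto

lemma can_split_add:
  assumes z: "z \<subseteq> {..<N}"
    and "can_split N (restr A z) c"
    and "can_split N (restr A ({..<N} - z)) d"
  shows "can_split N A (c + d)"
proof -
  obtain V W where V_disj: "\<forall>i<c. \<forall>j<c. i \<noteq> j \<longrightarrow> V i \<inter> V j = {}"
    and V_cover: "(\<Union>j<c. V j) = {..<N}" and V_split: "\<forall>j<c. restr (restr A z) (V j) = {}"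
    and W_disj: "\<forall>i<d. \<forall>j<d. i \<noteq> j \<longrightarrow> W i \<inter> W j = {}"
    and W_cover: "(\<Union>j<d. W j) = {..<N}"
    and W_split: "\<forall>j<d. restr (restr A ({..<N} - z)) (W j) = {}"
    using assms(2,3) unfolding can_split_def by (elim exE conjE) (rule that)
  define U where "U i = (if i < c then V i \<inter> z else W (i - c) \<inter> ({..<N} - z))" for i
  have "U i \<inter> U j = {}" if "i < c + d" "j < c + d" "i \<noteq> j" for i j
  proof (cases "i < c"; cases "j < c")
    assume "\<not> i < c" "\<not> j < c"
    with that have "i - c < d" "j - c < d" "i - c \<noteq> j - c"
      by auto
    with W_disj have "W (i - c) \<inter> W (j - c) = {}"
      by blast
    with \<open>\<not> i < c\<close> \<open>\<not> j < c\<close> show ?thesis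
      unfolding U_def by auto
  qed (use that V_disj in \<open>auto simp: U_def\<close>)
  moreover have "(\<Union>j<c + d. U j) = {..<N}"
  proof
    show "(\<Union>j<c + d. U j) \<subseteq> {..<N}"
      using z unfolding U_def by auto
    show "{..<N} \<subseteq> (\<Union>j<c + d. U j)"
    proof
      fix x assume x: "x \<in> {..<N}"
      show "x \<in> (\<Union>j<c + d. U j)"
      proof (cases "x \<in> z")
        case True
        with x V_cover obtain j where "j < c" "x \<in> V j" by blast
        with True show ?thesis unfolding U_def by (intro UN_I[of j]) auto
      next
        case False
        with x W_cover obtain j where "j < d" "x \<in> W j" by blast
        with False x show ?thesis unfolding U_def by (intro UN_I[of "c + j"]) auto
      qed
    qed
  qed
  moreover have "restr A (U j) = {}" if "j < c + d" for j
    using that V_split W_split unfolding U_def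
    by (cases "j < c") (auto simp: restr_restr)
  ultimately show ?thesis
    unfolding can_split_def by (intro exI[of _ U] conjI allI impI)
qed

lemma norm3_ge_Suc_if_not_can_split:
  "\<not> can_split N A (2 ^ n) \<Longrightarrow> norm3_ge N A (Suc n)"
proof (induction n arbitrary: A)
  case 0
  then show ?case using can_split_empty[of 1 N] by auto
next
  case (Suc n)
  have "norm3_ge N (restr A z) (Suc n) \<or> norm3_ge N (restr A ({..<N} - z)) (Suc n)"
    if "z \<subseteq> {..<N}" for z
    using Suc can_split_add[OF that, of A "2 ^ n" "2 ^ n"] by (auto simp: mult_2)
  then show ?case
    by simp
qed

lemma norm3_ge_Suc_nonempty: "norm3_ge N A (Suc m) \<Longrightarrow> A \<noteq> {}"
proof (induction m arbitrary: A)
  case (Suc m)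
  then have "norm3_ge N (restr A {}) (Suc m) \<or> norm3_ge N (restr A {..<N}) (Suc m)"
    by (metis Diff_empty empty_subsetI norm3_ge.simps(3))
  with Suc.IH show ?case
    unfolding restr_def by blast
qed simp

lemma norm3_ge_Suc_le_card_Union:
  assumes "A \<subseteq> P N" and "norm3_ge N A (Suc m)"
  shows "m \<le> card (\<Union>A)"
  using assms
proof (induction m arbitrary: A)
  case (Suc m)
  have fin: "finite (\<Union>A)"
    using Suc.prems(1) unfolding P_def by (auto intro: finite_subset)
  obtain a where "a \<in> A"
    using norm3_ge_Suc_nonempty Suc.prems(2) by blast
  with Suc.prems(1) have "card a \<ge> 2"
    unfolding P_def by auto
  then obtain x where "x \<in> a"
    by fastforce
  with \<open>a \<in> A\<close> have x: "x \<in> \<Union>A"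
    by blast
  define z where "z = \<Union>A - {x}"
  have z: "z \<subseteq> {..<N}"
    using Suc.prems(1) unfolding z_def P_def by auto
  txt \<open>No edge fits into \<open>N - z\<close>, whose vertices of \<open>\<Union>A\<close> are just \<open>x\<close>.\<close>
  have "restr A ({..<N} - z) = {}"
  proof (rule ccontr)
    assume "restr A ({..<N} - z) \<noteq> {}"
    then obtain b where "b \<in> A" "b \<subseteq> {x}"
      unfolding restr_def z_def by blast
    then have "card b \<le> 1"
      using card_mono[of "{x}" b] by simp
    with \<open>b \<in> A\<close> Suc.prems(1) show False
      unfolding P_def by auto
  qed
  moreover have "norm3_ge N (restr A z) (Suc m) \<or> norm3_ge N (restr A ({..<N} - z)) (Suc m)"
    using Suc.prems(2) z by simp
  ultimately have "norm3_ge N (restr A z) (Suc m)"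
    using norm3_ge_Suc_nonempty by blast
  moreover have "restr A z \<subseteq> P N"
    using Suc.prems(1) unfolding restr_def by auto
  ultimately have "m \<le> card (\<Union>(restr A z))"
    using Suc.IH by blast
  also have "\<dots> \<le> card z"
    using fin unfolding z_def restr_def by (intro card_mono) auto
  also have "\<dots> < card (\<Union>A)"
    using fin x unfolding z_def by (rule card_Diff1_less)
  finally show ?case by simp
qed simp

lemma norm3_ge_le_Suc:
  assumes "A \<subseteq> P N" and "norm3_ge N A m"
  shows "m \<le> Suc N"
proof (cases m)
  case (Suc k)
  have "\<Union>A \<subseteq> {..<N}"
    using assms(1) unfolding P_def by auto
  then have "card (\<Union>A) \<le> N"
    using card_mono[of "{..<N}"] by fastforce
  with norm3_ge_Suc_le_card_Union[OF assms(1)] assms(2) Suc show ?thesis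
    by fastforce
qed simp

lemma norm3_ge_le_norm3:
  assumes "A \<subseteq> P N" and "norm3_ge N A m"
  shows "m \<le> norm3 N A"
  unfolding norm3_def
  using assms norm3_ge_le_Suc by (intro Greatest_le_nat[of _ m "Suc N"]) auto

theorem theorem5p11:
  fixes N n :: nat and A :: "nat set set"
  assumes "A \<subseteq> P N"
    and "\<not> can_split N A (2 ^ n)"
  shows "norm3 N A > n"
  using norm3_ge_le_norm3[OF assms(1) norm3_ge_Suc_if_not_can_split[OF assms(2)]]
  by simp

end
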